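(* Let $n\geq 2$. If $A$ is an $L_n$-good $n\times n$ matrix, then no column of $A$ has entries equal to $1$ in both the first row and the last row.
   Context: For $n\geq 2$, $L_n$ is the set of vectors $\vec{x}=(x_1,\ldots,x_n)\in\mathbb{Z}_2^n$ with no $i\in\{1,\ldots,n-1\}$ such that $x_i=x_{i+1}=1$, and with not both $x_1=1$ and $x_n=1$. An $n\times n$ matrix $A$ over $\mathbb{Z}_2$ is $L_n$-good if it is invertible and $A\vec{x}\in L_n$ for all $\vec{x}\in L_n$. *)

theory Defs
  imports "HOL-Library.Z2" "Jordan_Normal_Form.Matrix"
begin

text \<open>Indices are 0-based: entry x_i of the paper is v $ (i-1).
  L_n: vectors in Z_2^n with no two cyclically consecutive ones.\<close>
definition L :: "nat \<Rightarrow> bit vec set" where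
  "L n = {v \<in> carrier_vec n.
      (\<not> (\<exists>i. i + 1 < n \<and> v $ i = 1 \<and> v $ (i + 1) = 1)) \<and>
      \<not> (v $ 0 = 1 \<and> v $ (n - 1) = 1)}"

definition L_good :: "nat \<Rightarrow> bit mat \<Rightarrow> bool" where
  "L_good n A \<longleftrightarrow> A \<in> carrier_mat n n \<and> invertible_mat A \<and>
      (\<forall>x \<in> L n. A *\<^sub>v x \<in> L n)"

end

theory Submission
  imports Defs
begin

text \<open>Since n \<ge> 2 every unit vector e_j lies in L_n, so for an L_n-good matrix A the
  column A e_j lies in L_n as well; in particular its first and last entries are not
  both 1.\<close>

lemma mult_mat_vec_unit_vec:
  fixes A :: "'a :: semiring_1 mat"
  assumes "A \<in> carrier_mat nr n" and "j < n"
  shows "A *\<^sub>v unit_vec n j = col A j"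
  using assms by (intro eq_vecI) auto

lemma unit_vec_in_L:
  assumes "2 \<le> n" and "j < n"
  shows "unit_vec n j \<in> L n"
  using assms unfolding L_def by (auto simp: unit_vec_def)

lemma L_good_col_in_L:
  assumes "2 \<le> n" and "L_good n A" and "j < n"
  shows "col A j \<in> L n"
proof -
  have A: "A \<in> carrier_mat n n" and preserves: "\<forall>x \<in> L n. A *\<^sub>v x \<in> L n"
    using assms(2) unfolding L_good_def by auto
  have "A *\<^sub>v unit_vec n j \<in> L n"
    using preserves unit_vec_in_L[OF assms(1,3)] by blast
  then show ?thesis
    using mult_mat_vec_unit_vec[OF A assms(3)] by simp
qed

theorem lemma3:
  fixes n :: nat and A :: "bit mat"
  assumes "n \<ge> 2" and "L_good n A"
  shows "\<forall>j < n. \<not> (A $$ (0, j) = 1 \<and> A $$ (n - 1, j) = 1)"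
proof (intro allI impI)
  fix j assume j: "j < n"
  have A: "A \<in> carrier_mat n n"
    using assms(2) unfolding L_good_def by simp
  have "col A j \<in> L n"
    using L_good_col_in_L[OF assms j] .
  then show "\<not> (A $$ (0, j) = 1 \<and> A $$ (n - 1, j) = 1)"
    using A j assms(1) unfolding L_def by auto
qed

end
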